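(* (i) For any prime power $q$ and any integers $k,n$ with $1<k<n-1$, there exists an integer $M(q,k,n)$ such that for every $m\geq M(q,k,n)$ there exists a $k$-dimensional linear MRD code in $\mathbb{F}_{q^m}^{n}$ that is not a generalized Gabidulin code. (ii) An integer $M(q,k,n)$ with this property can be taken to be the minimum $m\in\mathbb N$ satisfying $$1-\sum_{r=0}^k r\binom{k}{k-r}_q\binom{n-k}{r}_q q^{r^2}q^{-m}>(m-1)\,q^{-(m-1)(n-k-1)(k-1)} .$$
   Context: $\binom{a}{b}_q$ is the Gaussian binomial coefficient (number of $b$-dimensional subspaces of $\mathbb{F}_q^a$). Fix an $\mathbb{F}_q$-basis $b_1,\dots,b_m$ of $\mathbb{F}_{q^m}$; the rank of $v\in\mathbb{F}_{q^m}^n$ is the rank of the matrix $M\in\mathbb{F}_q^{m\times n}$ with $v_j=\sum_i M_{ij}b_i$, and the rank distance is $d_R(u,v)=\mathrm{rk}(u-v)$. A $k$-dimensional linear code is a $k$-dimensional $\mathbb{F}_{q^m}$-subspace of $\mathbb{F}_{q^m}^n$; it is MRD if its minimum rank distance is $n-k+1$. For $s$ coprime to $m$ and $g_1,\dots,g_n\in\mathbb{F}_{q^m}$ linearly independent over $\mathbb{F}_q$, the generalized Gabidulin code of dimension $k$ with parameter $s$ is the row space of the $k\times n$ matrix with $(i,j)$ entry $g_j^{q^{s(i-1)}}$; a generalized Gabidulin code is such a code for some such $s$ and $g_1,\dots,g_n$. *)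

theory Defs
  imports Complex_Main "HOL-Computational_Algebra.Primes"
begin

(* The prime subfield-level F_q inside a finite field of q^m elements:
   it is exactly the set of roots of x^q = x. *)
definition Fsub :: "nat \<Rightarrow> 'a::field set" where
  "Fsub q = {x. x ^ q = x}"

definition lin_indep_on :: "'a::field set \<Rightarrow> nat set \<Rightarrow> (nat \<Rightarrow> 'a) \<Rightarrow> bool" where
  "lin_indep_on S J v \<longleftrightarrow>
     (\<forall>c. (\<forall>j\<in>J. c j \<in> S) \<and> (\<Sum>j\<in>J. c j * v j) = 0 \<longrightarrow> (\<forall>j\<in>J. c j = 0))"

(* rank of v = (v_0,...,v_{n-1}) in F_{q^m}^n: column rank of its coefficient matrix over F_q,
   i.e. the maximal number of F_q-linearly independent entries *)
definition rk :: "nat \<Rightarrow> nat \<Rightarrow> (nat \<Rightarrow> 'a::field) \<Rightarrow> nat" where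
  "rk q n v = Max {card J | J. J \<subseteq> {..<n} \<and> lin_indep_on (Fsub q) J v}"

definition vecs :: "nat \<Rightarrow> (nat \<Rightarrow> 'a::zero) set" where
  "vecs n = {v. \<forall>j\<ge>n. v j = 0}"

definition vspan :: "(nat \<Rightarrow> 'a::field) list \<Rightarrow> (nat \<Rightarrow> 'a) set" where
  "vspan G = {(\<lambda>j. \<Sum>i<length G. c i * (G!i) j) | c. True}"

definition vindep :: "(nat \<Rightarrow> 'a::field) list \<Rightarrow> bool" where
  "vindep G \<longleftrightarrow>
     (\<forall>c. (\<lambda>j. \<Sum>i<length G. c i * (G!i) j) = (\<lambda>j. 0) \<longrightarrow> (\<forall>i<length G. c i = 0))"

definition is_linear_code :: "nat \<Rightarrow> nat \<Rightarrow> (nat \<Rightarrow> 'a::field) set \<Rightarrow> bool" where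
  "is_linear_code n k C \<longleftrightarrow>
     (\<exists>G. length G = k \<and> set G \<subseteq> vecs n \<and> vindep G \<and> C = vspan G)"

definition min_rank_dist :: "nat \<Rightarrow> nat \<Rightarrow> (nat \<Rightarrow> 'a::field) set \<Rightarrow> nat" where
  "min_rank_dist q n C = Min {rk q n (\<lambda>j. u j - v j) | u v. u \<in> C \<and> v \<in> C \<and> u \<noteq> v}"

definition is_MRD :: "nat \<Rightarrow> nat \<Rightarrow> nat \<Rightarrow> (nat \<Rightarrow> 'a::field) set \<Rightarrow> bool" where
  "is_MRD q n k C \<longleftrightarrow> is_linear_code n k C \<and> min_rank_dist q n C = n - k + 1"

definition gen_gabidulin :: "nat \<Rightarrow> nat \<Rightarrow> nat \<Rightarrow> nat \<Rightarrow> (nat \<Rightarrow> 'a::field) set \<Rightarrow> bool" where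
  "gen_gabidulin q m n k C \<longleftrightarrow>
     (\<exists>(s::nat) (g::nat \<Rightarrow> 'a). coprime s m \<and> lin_indep_on (Fsub q) {..<n} g \<and>
        C = vspan (map (\<lambda>i. \<lambda>j. if j < n then g j ^ (q ^ (s * i)) else 0) [0..<k]))"

(* Gaussian binomial coefficient [a choose b]_q (0 if b > a) *)
definition gauss_binom :: "nat \<Rightarrow> nat \<Rightarrow> nat \<Rightarrow> real" where
  "gauss_binom q a b = (\<Prod>i<b. (real q ^ (a - i) - 1) / (real q ^ (i + 1) - 1))"

definition bound_ineq :: "nat \<Rightarrow> nat \<Rightarrow> nat \<Rightarrow> nat \<Rightarrow> bool" where
  "bound_ineq q k n m \<longleftrightarrow>
     1 - (\<Sum>r = 0..k. real r * gauss_binom q k (k - r) * gauss_binom q (n - k) r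
            * real q ^ (r ^ 2) * real q powi (- int m))
     > (real m - 1) * real q powi (- ((int m - 1) * (int n - int k - 1) * (int k - 1)))"

definition M_bound :: "nat \<Rightarrow> nat \<Rightarrow> nat \<Rightarrow> nat" where
  "M_bound q k n = (LEAST m. 0 < m \<and> bound_ineq q k n m)"

end

theory Submission
  imports Defs "HOL-Computational_Algebra.Polynomial" "HOL-Library.FuncSet"
begin

text \<open>Write \<open>Q = q^m\<close> and count the \<open>Q^(n k)\<close> generator matrices \<open>G\<close> (lists of \<open>k\<close> vectors of
  length \<open>n\<close>). The row space of \<open>G\<close> is MRD as soon as every nonzero combination \<open>x G\<close> has rank
  above \<open>n - k\<close>; the Singleton argument then supplies a codeword of rank exactly \<open>n - k + 1\<close>.
  For fixed \<open>x \<noteq> 0\<close> the map \<open>G \<mapsto> x G\<close> hits every vector equally often, and at most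
  \<open>[n, k]_q Q^(n - k)\<close> vectors have rank at most \<open>n - k\<close>; double counting leaves at most
  \<open>[n, k]_q Q^(n k) / (Q - 1) \<le> (S / Q) Q^(n k)\<close> failing matrices, where \<open>S\<close> is the sum in the
  inequality defining \<open>M(q, k, n)\<close>, which exceeds \<open>[n, k]_q\<close> by the \<open>q\<close>-Vandermonde identity.
  A generalized Gabidulin code lies in the span of the rows attached to one of \<open>(m - 1) Q^(n - 1)\<close>
  normalized parameters \<open>(s mod m, g / g\<^sub>1)\<close>, so at most \<open>(m - 1) Q^(n - 1) Q^(k\<^sup>2)\<close> matrices
  generate one. The inequality says precisely that the two exceptional classes cannot cover all
  matrices, and it persists for every larger \<open>m\<close>.\<close>

section \<open>Gaussian binomial coefficients\<close>

lemma gauss_binom_0 [simp]: "gauss_binom q a 0 = 1"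
  by (simp add: gauss_binom_def)

lemma gauss_binom_Suc:
  "gauss_binom q a (Suc b) = gauss_binom q a b * ((real q ^ (a - b) - 1) / (real q ^ (b + 1) - 1))"
  by (simp add: gauss_binom_def)

lemma gauss_binom_eq_0: "a < b \<Longrightarrow> gauss_binom q a b = 0"
  unfolding gauss_binom_def by (rule prod_zero) (auto intro!: bexI[of _ a])

lemma gauss_binom_nonneg:
  assumes "q \<ge> 1"
  shows "gauss_binom q a b \<ge> 0"
proof -
  have "real q ^ j \<ge> 1" for j using assms by (simp add: one_le_power)
  then show ?thesis unfolding gauss_binom_def by (intro prod_nonneg divide_nonneg_nonneg) (auto simp del: power_Suc)
qed

lemma gauss_binom_Suc_Suc:
  assumes "q \<ge> 2"
  shows "gauss_binom q (Suc a) (Suc b) = gauss_binom q a b * ((real q ^ Suc a - 1) / (real q ^ (b + 1) - 1))"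
proof -
  have "gauss_binom q (Suc a) (Suc b) = (\<Prod>i<Suc b. real q ^ (Suc a - i) - 1) / (\<Prod>i<Suc b. real q ^ (i + 1) - 1)"
    unfolding gauss_binom_def by (simp add: prod_dividef)
  also have "(\<Prod>i<Suc b. real q ^ (Suc a - i) - 1) = (real q ^ Suc a - 1) * (\<Prod>i<b. real q ^ (a - i) - 1)"
    by (subst prod.lessThan_Suc_shift) simp
  finally show ?thesis unfolding gauss_binom_def by (auto simp: prod_dividef mult_ac)
qed

lemma gauss_binom_pascal:
  assumes "q \<ge> 2"
  shows "gauss_binom q (Suc a) (Suc b) = gauss_binom q a b + real q ^ Suc b * gauss_binom q a (Suc b)"
    and "gauss_binom q (Suc a) (Suc b) = real q ^ (a - b) * gauss_binom q a b + gauss_binom q a (Suc b)"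
proof -
  have "gauss_binom q (Suc a) (Suc b) = gauss_binom q a b + real q ^ Suc b * gauss_binom q a (Suc b) \<and>
        gauss_binom q (Suc a) (Suc b) = real q ^ (a - b) * gauss_binom q a b + gauss_binom q a (Suc b)"
  proof (cases "b \<le> a")
    case True
    have "real q ^ (b + 1) > 1" using assms by (intro one_less_power) auto
    moreover have "real q ^ Suc a = real q ^ Suc b * real q ^ (a - b)"
      using True by (simp add: power_add[symmetric])
    ultimately show ?thesis unfolding gauss_binom_Suc_Suc[OF assms] gauss_binom_Suc[of q a b]
      by (auto simp: field_simps)
  qed (simp add: gauss_binom_eq_0)
  then show "gauss_binom q (Suc a) (Suc b) = gauss_binom q a b + real q ^ Suc b * gauss_binom q a (Suc b)"
    and "gauss_binom q (Suc a) (Suc b) = real q ^ (a - b) * gauss_binom q a b + gauss_binom q a (Suc b)"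
    by auto
qed

lemma gauss_binom_ge_1:
  assumes "q \<ge> 2" "b \<le> a"
  shows "gauss_binom q a b \<ge> 1"
  using assms(2)
proof (induction a arbitrary: b)
  case (Suc a)
  show ?case
  proof (cases b)
    case (Suc b')
    have "gauss_binom q a (Suc b') \<ge> 0" using gauss_binom_nonneg assms by simp
    moreover have "real q ^ (a - b') * gauss_binom q a b' \<ge> 1 * 1"
      using Suc Suc.prems Suc.IH assms(1) by (intro mult_mono) (auto simp: one_le_power)
    ultimately show ?thesis unfolding Suc gauss_binom_pascal(2)[OF assms(1)] by linarith
  qed simp
qed simp

lemma gauss_binom_self: "q \<ge> 2 \<Longrightarrow> gauss_binom q a a = 1"
  by (induction a) (simp_all add: gauss_binom_pascal(1) gauss_binom_eq_0)

lemma gauss_binom_symmetric: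
  assumes "q \<ge> 2" "b \<le> a"
  shows "gauss_binom q a (a - b) = gauss_binom q a b"
  using assms(2)
proof (induction a arbitrary: b)
  case (Suc a)
  show ?case
  proof (cases "b = 0 \<or> b = Suc a")
    case True
    then show ?thesis using gauss_binom_self[OF assms(1)] by auto
  next
    case False
    then obtain b' where b': "b = Suc b'" "b' < a" using Suc.prems by (cases b) auto
    then have e: "Suc a - b = Suc (a - Suc b')" "a - (a - Suc b') = Suc b'" "Suc (a - Suc b') = a - b'"
      by auto
    have "gauss_binom q (Suc a) (Suc a - b)
        = real q ^ Suc b' * gauss_binom q a (a - Suc b') + gauss_binom q a (a - b')"
      using gauss_binom_pascal(2)[OF assms(1), of a "a - Suc b'"] by (simp only: e)
    also have "\<dots> = gauss_binom q (Suc a) b"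
      using Suc.IH[of b'] Suc.IH[of "Suc b'"] b' by (simp add: gauss_binom_pascal(1)[OF assms(1)])
    finally show ?thesis .
  qed
qed simp

lemma gauss_binom_vandermonde:
  assumes "q \<ge> 2"
  shows "gauss_binom q (a + b) c
    = (\<Sum>j=0..c. gauss_binom q a (c - j) * gauss_binom q b j * real q ^ (j * (a + j - c)))"
proof (induction b arbitrary: c)
  case 0
  have "(\<Sum>j=0..c. gauss_binom q a (c - j) * gauss_binom q 0 j * real q ^ (j * (a + j - c)))
      = (\<Sum>j\<in>{0}. gauss_binom q a (c - j) * gauss_binom q 0 j * real q ^ (j * (a + j - c)))"
    by (rule sum.mono_neutral_right) (auto simp: gauss_binom_eq_0)
  then show ?case by simp
next
  case (Suc b)
  show ?case
  proof (cases c)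
    case (Suc c')
    define g where "g j = gauss_binom q a (Suc c' - j) * gauss_binom q b j * real q ^ (j * (a + j - Suc c'))" for j
    define h where "h j = gauss_binom q a (c' - j) * gauss_binom q b j * real q ^ (j * (a + j - c'))" for j
    have split: "gauss_binom q a (c' - j) * gauss_binom q (Suc b) (Suc j) * real q ^ (Suc j * (a + Suc j - Suc c'))
        = g (Suc j) + real q ^ (a + b - c') * h j" for j
    proof (cases "c' - j \<le> a \<and> j \<le> b")
      case True
      then have "a + Suc j - Suc c' = a + j - c'" "a + b - c' = (a + j - c') + (b - j)" by auto
      then have "b - j + Suc j * (a + Suc j - Suc c') = a + b - c' + j * (a + j - c')" by simp
      then have "real q ^ (b - j) * real q ^ (Suc j * (a + Suc j - Suc c'))
          = real q ^ (a + b - c') * real q ^ (j * (a + j - c'))"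
        by (metis power_add)
      then show ?thesis unfolding gauss_binom_pascal(2)[OF assms] g_def h_def
        by (simp add: distrib_left distrib_right mult_ac)
    next
      case False
      then show ?thesis unfolding gauss_binom_pascal(2)[OF assms] g_def h_def
        by (auto simp: gauss_binom_eq_0 distrib_left distrib_right)
    qed
    have "(\<Sum>j=0..Suc c'. gauss_binom q a (Suc c' - j) * gauss_binom q (Suc b) j * real q ^ (j * (a + j - Suc c')))
       = gauss_binom q a (Suc c') + (\<Sum>j=0..c'. gauss_binom q a (c' - j) * gauss_binom q (Suc b) (Suc j) * real q ^ (Suc j * (a + Suc j - Suc c')))"
      by (simp only: sum.atLeast0_atMost_Suc_shift comp_def diff_Suc_Suc) simp
    also have "\<dots> = (g 0 + (\<Sum>j=0..c'. g (Suc j))) + real q ^ (a + b - c') * (\<Sum>j=0..c'. h j)"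
      unfolding split sum.distrib sum_distrib_left[symmetric] by (simp add: g_def)
    also have "g 0 + (\<Sum>j=0..c'. g (Suc j)) = gauss_binom q (a + b) (Suc c')"
      unfolding Suc.IH g_def by (simp only: sum.atLeast0_atMost_Suc_shift comp_def)
    also have "(\<Sum>j=0..c'. h j) = gauss_binom q (a + b) c'"
      unfolding Suc.IH h_def ..
    finally show ?thesis
      using gauss_binom_pascal(2)[OF assms, of "a + b" c'] Suc by simp
  qed simp
qed

section \<open>Finite fields\<close>

lemma finite_field_power_card:
  fixes x :: "'a::{field,finite}"
  shows "x ^ card (UNIV :: 'a set) = x"
proof (cases "x = 0")
  case False
  define U where "U = (UNIV :: 'a set) - {0}"
  have "bij_betw (\<lambda>y. x * y) U U"
    by (rule bij_betwI[where g="\<lambda>y. y / x"]) (use False in \<open>auto simp: U_def\<close>)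
  then have "(\<Prod>y\<in>U. x * y) = (\<Prod>y\<in>U. y)"
    using prod.reindex_bij_betw[of "\<lambda>y. x * y" U U "\<lambda>y. y"] by simp
  moreover have "(\<Prod>y\<in>U. y) \<noteq> 0" unfolding U_def by simp
  ultimately have "x ^ card U = 1" by (simp add: prod.distrib)
  moreover have "card (UNIV :: 'a set) = Suc (card U)"
    using finite_UNIV_card_ge_0[where 'a='a] unfolding U_def by (simp add: card_Diff_singleton)
  ultimately show ?thesis by simp
qed (simp add: finite_UNIV_card_ge_0 zero_power)

lemma finite_field_power_power_mod:
  fixes x :: "'a::{field,finite}"
  assumes "card (UNIV :: 'a set) = q ^ m"
  shows "x ^ (q ^ (s * i)) = x ^ (q ^ ((s mod m) * i))"
proof -
  have iterate: "y ^ (q ^ (m * t)) = y" for y :: 'a and t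
  proof (induction t)
    case (Suc t)
    have "y ^ (q ^ (m * Suc t)) = (y ^ (q ^ (m * t))) ^ (q ^ m)"
      by (simp add: power_mult[symmetric] power_add[symmetric] mult.commute)
    then show ?case using Suc finite_field_power_card[of y] assms by simp
  qed simp
  have "s * i = (s mod m) * i + m * ((s div m) * i)"
    by (metis add_mult_distrib mod_div_mult_eq mult.assoc mult.commute)
  then have "x ^ (q ^ (s * i)) = (x ^ (q ^ ((s mod m) * i))) ^ (q ^ (m * ((s div m) * i)))"
    by (simp add: power_mult[symmetric] power_add)
  then show ?thesis using iterate by simp
qed

lemma card_UNIV_field_ge_2: "card (UNIV :: 'a::{field,finite} set) \<ge> 2"
proof -
  have "card {0, 1::'a} \<le> card (UNIV :: 'a set)" by (rule card_mono) simp_all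
  then show ?thesis by simp
qed

lemma zero_mem_Fsub: "q > 0 \<Longrightarrow> 0 \<in> Fsub q"
  by (simp add: Fsub_def zero_power)

lemma one_mem_Fsub: "1 \<in> Fsub q"
  by (simp add: Fsub_def)

lemma divide_mem_Fsub: "x \<in> Fsub q \<Longrightarrow> y \<in> Fsub q \<Longrightarrow> x / y \<in> Fsub q"
  by (simp add: Fsub_def power_divide)

lemma card_Fsub_le:
  assumes "q \<ge> 2"
  shows "card (Fsub q :: 'a::{field,finite} set) \<le> q"
proof -
  define p :: "'a poly" where "p = monom 1 q - [:0, 1:]"
  have "degree (monom (1::'a) q + - [:0, 1:]) = q"
    using assms by (subst degree_add_eq_left) (auto simp: degree_monom_eq)
  then have "degree p = q" unfolding p_def by (metis diff_conv_add_uminus)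
  moreover have "p \<noteq> 0" using \<open>degree p = q\<close> assms by auto
  moreover have "Fsub q = {x. poly p x = 0}"
    unfolding p_def Fsub_def by (simp add: poly_monom)
  ultimately show ?thesis using card_poly_roots_bound[of p] by simp
qed

section \<open>Rank\<close>

lemma lin_indep_on_empty: "lin_indep_on S {} v"
  by (simp add: lin_indep_on_def)

lemma lin_indep_on_nonzero:
  fixes v :: "nat \<Rightarrow> 'a::field"
  assumes "lin_indep_on (Fsub q) J v" "j \<in> J" "finite J" "q > 0"
  shows "v j \<noteq> 0"
proof
  assume "v j = 0"
  define c where "c i = (if i = j then 1 else (0::'a))" for i
  have "(\<Sum>i\<in>J. c i * v i) = (\<Sum>i\<in>J. if i = j then v j else 0)"
    by (rule sum.cong) (auto simp: c_def)
  then have "(\<Sum>i\<in>J. c i * v i) = 0" using assms(2,3) \<open>v j = 0\<close> by simp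
  moreover have "\<forall>i\<in>J. c i \<in> Fsub q" by (simp add: c_def zero_mem_Fsub one_mem_Fsub assms(4))
  ultimately have "c j = 0" using assms(1,2) unfolding lin_indep_on_def by blast
  then show False by (simp add: c_def)
qed

lemma lin_indep_on_mult_iff:
  assumes "l \<noteq> 0"
  shows "lin_indep_on S J (\<lambda>j. l * v j) \<longleftrightarrow> lin_indep_on S J v"
proof -
  have "(\<Sum>j\<in>J. c j * (l * v j)) = l * (\<Sum>j\<in>J. c j * v j)" for c
    by (simp add: sum_distrib_left mult_ac)
  then show ?thesis unfolding lin_indep_on_def using assms by simp
qed

lemma finite_rk_candidates: "finite {card J | J. J \<subseteq> {..<n} \<and> lin_indep_on S J v}"
  by (rule finite_subset[of _ "card ` Pow {..<n}"]) auto

lemma card_le_rk: "J \<subseteq> {..<n} \<Longrightarrow> lin_indep_on (Fsub q) J v \<Longrightarrow> card J \<le> rk q n v"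
  unfolding rk_def by (rule Max_ge[OF finite_rk_candidates]) blast

lemma rk_obtain:
  obtains J where "J \<subseteq> {..<n}" "lin_indep_on (Fsub q) J v" "card J = rk q n v"
proof -
  have "rk q n v \<in> {card J | J. J \<subseteq> {..<n} \<and> lin_indep_on (Fsub q) J v}"
    unfolding rk_def by (rule Max_in[OF finite_rk_candidates]) (use lin_indep_on_empty in blast)
  then show ?thesis using that by auto
qed

lemma rk_le: "rk q n v \<le> n"
proof -
  obtain J where "J \<subseteq> {..<n}" "card J = rk q n v" by (rule rk_obtain)
  then show ?thesis using card_mono[of "{..<n}" J] by simp
qed

lemma rk_le_card_support:
  assumes "q > 0"
  shows "rk q n v \<le> card {j \<in> {..<n}. v j \<noteq> 0}"
proof -
  obtain J where J: "J \<subseteq> {..<n}" "lin_indep_on (Fsub q) J v" "card J = rk q n v"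
    by (rule rk_obtain)
  then have "J \<subseteq> {j \<in> {..<n}. v j \<noteq> 0}"
    using lin_indep_on_nonzero[OF J(2) _ _ assms] finite_subset by blast
  then show ?thesis using J(3) card_mono[of "{j \<in> {..<n}. v j \<noteq> 0}" J] by simp
qed

lemma rk_zero: "q > 0 \<Longrightarrow> rk q n (\<lambda>_. 0) = 0"
  using rk_le_card_support[of q n "\<lambda>_. 0"] by simp

lemma rk_mult: "l \<noteq> 0 \<Longrightarrow> rk q n (\<lambda>j. l * v j) = rk q n v"
  unfolding rk_def by (simp add: lin_indep_on_mult_iff)

lemma rk_le_rk_fun_upd: "rk q n w \<le> rk q (Suc n) (w(n := a))"
proof -
  obtain J where J: "J \<subseteq> {..<n}" "lin_indep_on (Fsub q) J w" "card J = rk q n w"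
    by (rule rk_obtain)
  have "(\<Sum>j\<in>J. c j * (w(n := a)) j) = (\<Sum>j\<in>J. c j * w j)" for c
    by (rule sum.cong) (use J(1) in auto)
  then have "lin_indep_on (Fsub q) J (w(n := a))"
    using J(2) unfolding lin_indep_on_def by simp
  moreover have "J \<subseteq> {..<Suc n}" using J(1) by auto
  ultimately show ?thesis using card_le_rk[of J "Suc n" q "w(n := a)"] J(3) by simp
qed

text \<open>\<open>insert n J\<close> is dependent for \<open>w(n := a)\<close>, and the dependence must involve \<open>a\<close>
  since \<open>J\<close> is independent for \<open>w\<close>.\<close>
lemma rk_fun_upd_le_imp_in_span:
  fixes w :: "nat \<Rightarrow> 'a::field"
  assumes J: "J \<subseteq> {..<n}" "lin_indep_on (Fsub q) J w" "card J = rk q n w"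
    and a: "rk q (Suc n) (w(n := a)) \<le> rk q n w"
  shows "\<exists>t\<in>PiE J (\<lambda>_. Fsub q). a = - (\<Sum>j\<in>J. t j * w j)"
proof -
  have fJ: "finite J" and nJ: "n \<notin> J" using J(1) finite_subset by auto
  have "\<not> lin_indep_on (Fsub q) (insert n J) (w(n := a))"
  proof
    assume "lin_indep_on (Fsub q) (insert n J) (w(n := a))"
    with J(1) have "card (insert n J) \<le> rk q (Suc n) (w(n := a))"
      by (intro card_le_rk) auto
    with a J(3) fJ nJ show False by simp
  qed
  then obtain c where c: "\<forall>j\<in>insert n J. c j \<in> Fsub q"
     "(\<Sum>j\<in>insert n J. c j * (w(n := a)) j) = 0" "\<exists>j\<in>insert n J. c j \<noteq> 0"
    unfolding lin_indep_on_def by blast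
  have "(\<Sum>j\<in>J. c j * (w(n := a)) j) = (\<Sum>j\<in>J. c j * w j)"
    by (rule sum.cong) (use nJ in auto)
  then have eq: "c n * a + (\<Sum>j\<in>J. c j * w j) = 0"
    using c(2) fJ nJ by simp
  have "c n \<noteq> 0"
  proof
    assume "c n = 0"
    then have "(\<Sum>j\<in>J. c j * w j) = 0" using eq by simp
    then have "\<forall>j\<in>J. c j = 0" using J(2) c(1) unfolding lin_indep_on_def by blast
    then show False using c(3) \<open>c n = 0\<close> by auto
  qed
  define t where "t = restrict (\<lambda>j. c j / c n) J"
  have "(\<Sum>j\<in>J. t j * w j) = (\<Sum>j\<in>J. c j * w j) / c n"
    unfolding t_def by (simp add: sum_divide_distrib)
  also have "(\<Sum>j\<in>J. c j * w j) = - (c n * a)"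
    using eq by (simp add: eq_neg_iff_add_eq_0 add.commute)
  finally have "a = - (\<Sum>j\<in>J. t j * w j)" using \<open>c n \<noteq> 0\<close> by simp
  moreover have "t \<in> PiE J (\<lambda>_. Fsub q)" unfolding t_def using c(1) divide_mem_Fsub by auto
  ultimately show ?thesis by blast
qed

lemma card_rk_fun_upd_le:
  fixes w :: "nat \<Rightarrow> 'a::{field,finite}"
  assumes "q \<ge> 2"
  shows "card {a. rk q (Suc n) (w(n := a)) \<le> rk q n w} \<le> q ^ rk q n w"
proof -
  obtain J where J: "J \<subseteq> {..<n}" "lin_indep_on (Fsub q) J w" "card J = rk q n w"
    by (rule rk_obtain)
  have fJ: "finite J" using J(1) finite_subset by auto
  define f where "f t = - (\<Sum>j\<in>J. t j * w j)" for t :: "nat \<Rightarrow> 'a"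
  have "{a. rk q (Suc n) (w(n := a)) \<le> rk q n w} \<subseteq> f ` (PiE J (\<lambda>_. Fsub q))"
    using rk_fun_upd_le_imp_in_span[OF J] unfolding f_def by blast
  then have "card {a. rk q (Suc n) (w(n := a)) \<le> rk q n w} \<le> card (f ` (PiE J (\<lambda>_. Fsub q)))"
    by (rule card_mono[rotated]) simp
  also have "\<dots> \<le> card (PiE J (\<lambda>_. Fsub q :: 'a set))"
    by (rule card_image_le) (simp add: fJ finite_PiE)
  also have "\<dots> = card (Fsub q :: 'a set) ^ card J" by (simp add: card_PiE fJ)
  also have "\<dots> \<le> q ^ rk q n w" using power_mono[OF card_Fsub_le[OF assms]] J(3) by simp
  finally show ?thesis .
qed

lemma vecs_0: "vecs 0 = {\<lambda>_. 0}"
  by (auto simp: vecs_def)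

lemma vecs_Suc: "vecs (Suc n) = (\<lambda>(w, a). w(n := a)) ` (vecs n \<times> UNIV)"
proof (intro equalityI subsetI)
  fix v assume "v \<in> vecs (Suc n)"
  then have "v(n := 0) \<in> vecs n" by (auto simp: vecs_def)
  then show "v \<in> (\<lambda>(w, a). w(n := a)) ` (vecs n \<times> UNIV)"
    by (intro image_eqI[where x="(v(n := 0), v n)"]) auto
qed (auto simp: vecs_def)

lemma inj_on_fun_upd_vecs: "inj_on (\<lambda>(w, a). w(n := a)) (vecs n \<times> UNIV)"
proof (rule inj_onI, clarify)
  fix w a w' a' assume h: "w \<in> vecs n" "w' \<in> vecs n" "w(n := a) = w'(n := a')"
  then have "w j = w' j" for j by (cases "j = n") (auto simp: vecs_def dest: fun_cong[of _ _ j])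
  then show "w = w' \<and> a = a'" using fun_cong[OF h(3), of n] by auto
qed

lemma finite_vecs: "finite (vecs n :: (nat \<Rightarrow> 'a::{zero,finite}) set)"
  by (induction n) (simp_all add: vecs_0 vecs_Suc)

lemma card_vecs: "card (vecs n :: (nat \<Rightarrow> 'a::{zero,finite}) set) = card (UNIV :: 'a set) ^ n"
  by (induction n) (simp_all add: vecs_0 vecs_Suc card_image inj_on_fun_upd_vecs card_cartesian_product)

lemma card_rk_le_Suc:
  fixes d :: nat
  assumes "q \<ge> 2"
  defines "R n \<equiv> \<lambda>P. card {w \<in> vecs n. P (rk q n (w :: nat \<Rightarrow> 'a::{field,finite}))}"
  shows "R (Suc n) (\<lambda>r. r \<le> d) \<le> R n (\<lambda>r. r < d) * card (UNIV :: 'a set) + R n (\<lambda>r. r \<le> d) * q ^ d"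
proof -
  define A1 where "A1 = {w \<in> vecs n. rk q n (w :: nat \<Rightarrow> 'a) < d}"
  define A2 where "A2 = {w \<in> vecs n. rk q n (w :: nat \<Rightarrow> 'a) \<le> d}"
  define F where "F w = {a. rk q (Suc n) (w(n := a)) \<le> rk q n w}" for w :: "nat \<Rightarrow> 'a"
  have "{w \<in> vecs (Suc n). rk q (Suc n) w \<le> d} \<subseteq> (\<lambda>(w, a). w(n := a)) ` (A1 \<times> UNIV \<union> Sigma A2 F)"
  proof
    fix v :: "nat \<Rightarrow> 'a" assume v: "v \<in> {w \<in> vecs (Suc n). rk q (Suc n) w \<le> d}"
    define w where "w = v(n := 0)"
    have "w \<in> vecs n" "v = w(n := v n)" using v by (auto simp: vecs_def w_def)
    moreover have "rk q n w \<le> rk q (Suc n) v" using rk_le_rk_fun_upd[of q n w "v n"] \<open>v = w(n := v n)\<close> by simp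
    ultimately have "(w, v n) \<in> A1 \<times> UNIV \<union> Sigma A2 F"
      using v unfolding A1_def A2_def F_def by (cases "rk q n w < d") auto
    then show "v \<in> (\<lambda>(w, a). w(n := a)) ` (A1 \<times> UNIV \<union> Sigma A2 F)"
      using \<open>v = w(n := v n)\<close> by (intro image_eqI[where x="(w, v n)"]) auto
  qed
  moreover have "finite A1" "finite A2" unfolding A1_def A2_def by (simp_all add: finite_vecs)
  moreover have "finite (A1 \<times> UNIV \<union> Sigma A2 F)" using \<open>finite A1\<close> \<open>finite A2\<close> by auto
  ultimately have "R (Suc n) (\<lambda>r. r \<le> d) \<le> card (A1 \<times> UNIV \<union> Sigma A2 F)"
    unfolding R_def by (meson card_image_le card_mono finite_imageI order_trans)
  also have "\<dots> \<le> card A1 * card (UNIV :: 'a set) + (\<Sum>w\<in>A2. card (F w))"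
    using card_Un_le[of "A1 \<times> UNIV" "Sigma A2 F"] \<open>finite A2\<close>
    by (simp add: card_cartesian_product card_SigmaI)
  also have "\<dots> \<le> card A1 * card (UNIV :: 'a set) + card A2 * q ^ d"
  proof -
    have "card (F w) \<le> q ^ d" if "w \<in> A2" for w
    proof -
      have "q ^ rk q n w \<le> q ^ d" using assms(1) that by (intro power_increasing) (auto simp: A2_def)
      then show ?thesis using card_rk_fun_upd_le[OF assms(1)] unfolding F_def by (rule le_trans[rotated])
    qed
    then show ?thesis using sum_mono[of A2 "\<lambda>w. card (F w)" "\<lambda>_. q ^ d"] by simp
  qed
  finally show ?thesis unfolding R_def A1_def A2_def .
qed

lemma card_rk_le:
  assumes "q \<ge> 2" "d \<le> n"
  shows "real (card {w \<in> vecs n. rk q n (w :: nat \<Rightarrow> 'a::{field,finite}) \<le> d})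
    \<le> gauss_binom q n d * real (card (UNIV :: 'a set)) ^ d"
  using assms(2)
proof (induction n arbitrary: d)
  case 0
  have "card {w \<in> vecs 0. rk q 0 (w :: nat \<Rightarrow> 'a) \<le> d} \<le> card (vecs 0 :: (nat \<Rightarrow> 'a) set)"
    by (rule card_mono) (auto simp: vecs_0)
  then show ?case using 0 by (simp add: vecs_0)
next
  case (Suc n)
  define Q where "Q = card (UNIV :: 'a set)"
  define R where "R n P = card {w \<in> vecs n. P (rk q n (w :: nat \<Rightarrow> 'a))}" for n P
  show ?case
  proof (cases "d = Suc n")
    case True
    have "R (Suc n) (\<lambda>r. r \<le> d) \<le> card (vecs (Suc n) :: (nat \<Rightarrow> 'a) set)"
      unfolding R_def by (rule card_mono) (auto simp: finite_vecs)
    then have "real (R (Suc n) (\<lambda>r. r \<le> d)) \<le> real (card (UNIV :: 'a set)) ^ Suc n"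
      unfolding card_vecs by (metis of_nat_le_iff of_nat_power)
    then show ?thesis using True gauss_binom_self[OF assms(1)] unfolding R_def by simp
  next
    case False
    then have "d \<le> n" using Suc.prems by simp
    have step: "real (R (Suc n) (\<lambda>r. r \<le> d)) \<le> real (R n (\<lambda>r. r < d)) * Q + real (R n (\<lambda>r. r \<le> d)) * q ^ d"
      using card_rk_le_Suc[OF assms(1), of n d, where 'a='a] unfolding R_def Q_def
      by (metis (no_types, lifting) of_nat_add of_nat_le_iff of_nat_mult of_nat_power)
    show ?thesis
    proof (cases d)
      case 0
      then show ?thesis using step Suc.IH[OF \<open>d \<le> n\<close>] unfolding R_def by simp
    next
      case (Suc d')
      have "R n (\<lambda>r. r < d) = R n (\<lambda>r. r \<le> d')" unfolding R_def Suc less_Suc_eq_le ..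
      then have "real (R (Suc n) (\<lambda>r. r \<le> d))
          \<le> real (R n (\<lambda>r. r \<le> d')) * Q + real (R n (\<lambda>r. r \<le> d)) * q ^ d"
        using step by simp
      also have "\<dots> \<le> gauss_binom q n d' * Q ^ d' * Q + gauss_binom q n d * Q ^ d * q ^ d"
        using Suc.IH[of d'] Suc.IH[OF \<open>d \<le> n\<close>] \<open>d \<le> n\<close> Suc unfolding R_def Q_def
        by (intro add_mono mult_right_mono) auto
      also have "\<dots> = gauss_binom q (Suc n) d * Q ^ d"
        using gauss_binom_pascal(1)[OF assms(1), of n d'] Suc by (simp add: algebra_simps)
      finally show ?thesis unfolding R_def Q_def by simp
    qed
  qed
qed

section \<open>Generator matrices\<close>

definition lin_comb :: "(nat \<Rightarrow> 'a::field) \<Rightarrow> (nat \<Rightarrow> 'a) list \<Rightarrow> nat \<Rightarrow> 'a" where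
  "lin_comb x G = (\<lambda>j. \<Sum>i<length G. x i * (G ! i) j)"

definition gen_matrices :: "nat \<Rightarrow> nat \<Rightarrow> (nat \<Rightarrow> 'a::zero) list set" where
  "gen_matrices k n = {G. set G \<subseteq> vecs n \<and> length G = k}"

definition nonzero_vecs :: "nat \<Rightarrow> (nat \<Rightarrow> 'a::zero) set" where
  "nonzero_vecs k = vecs k - {\<lambda>_. 0}"

definition has_low_rank_comb :: "nat \<Rightarrow> nat \<Rightarrow> nat \<Rightarrow> nat \<Rightarrow> (nat \<Rightarrow> 'a::field) list \<Rightarrow> bool" where
  "has_low_rank_comb q k n d G \<longleftrightarrow> (\<exists>x\<in>nonzero_vecs k. rk q n (lin_comb x G) \<le> d)"

definition remove_nth :: "nat \<Rightarrow> 'b list \<Rightarrow> 'b list" where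
  "remove_nth i xs = take i xs @ drop (Suc i) xs"

lemma vspan_eq_lin_comb: "vspan G = {lin_comb c G | c. True}"
  by (simp add: vspan_def lin_comb_def)

lemma lin_comb_cong: "(\<And>i. i < length G \<Longrightarrow> x i = y i) \<Longrightarrow> lin_comb x G = lin_comb y G"
  unfolding lin_comb_def by (intro ext sum.cong) auto

lemma lin_comb_zero: "lin_comb (\<lambda>_. 0) G = (\<lambda>_. 0)"
  by (simp add: lin_comb_def)

lemma lin_comb_diff: "lin_comb (\<lambda>i. x i - y i) G = (\<lambda>j. lin_comb x G j - lin_comb y G j)"
  unfolding lin_comb_def by (simp add: left_diff_distrib sum_subtractf)

lemma lin_comb_mult: "lin_comb (\<lambda>i. l * x i) G = (\<lambda>j. l * lin_comb x G j)"
  unfolding lin_comb_def by (simp add: sum_distrib_left mult_ac)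

lemma lin_comb_in_vecs:
  assumes "set G \<subseteq> vecs n"
  shows "lin_comb x G \<in> vecs n"
proof -
  have "(G ! i) j = 0" if "i < length G" "n \<le> j" for i j
    using assms nth_mem[OF that(1)] that(2) by (auto simp: vecs_def)
  then show ?thesis unfolding vecs_def lin_comb_def by simp
qed

lemma vspan_eq_image_lin_comb: "vspan G = (\<lambda>c. lin_comb c G) ` vecs (length G)"
proof (intro equalityI subsetI)
  fix v assume "v \<in> vspan G"
  then obtain c where "v = lin_comb c G" by (auto simp: vspan_eq_lin_comb)
  moreover have "lin_comb c G = lin_comb (\<lambda>i. if i < length G then c i else 0) G"
    by (rule lin_comb_cong) simp
  moreover have "(\<lambda>i. if i < length G then c i else 0) \<in> vecs (length G)" by (simp add: vecs_def)
  ultimately show "v \<in> (\<lambda>c. lin_comb c G) ` vecs (length G)" by blast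
qed (auto simp: vspan_eq_lin_comb)

lemma set_subset_vspan: "set G \<subseteq> vspan G"
proof
  fix v assume "v \<in> set G"
  then obtain i where i: "i < length G" "v = G ! i" by (metis in_set_conv_nth)
  have "lin_comb (\<lambda>l. if l = i then 1 else 0) G = v"
  proof
    fix j
    have "lin_comb (\<lambda>l. if l = i then 1 else 0) G j = (\<Sum>l<length G. if l = i then (G ! i) j else 0)"
      unfolding lin_comb_def by (rule sum.cong) auto
    then show "lin_comb (\<lambda>l. if l = i then 1 else 0) G j = v j" using i by simp
  qed
  then show "v \<in> vspan G" by (auto simp: vspan_eq_lin_comb)
qed

lemma finite_vspan: "finite (vspan (G :: (nat \<Rightarrow> 'a::{field,finite}) list))"
  unfolding vspan_eq_image_lin_comb by (simp add: finite_vecs)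

lemma card_vspan_le: "card (vspan (G :: (nat \<Rightarrow> 'a::{field,finite}) list)) \<le> card (UNIV :: 'a set) ^ length G"
  unfolding vspan_eq_image_lin_comb by (metis card_image_le card_vecs finite_vecs)

lemma finite_gen_matrices: "finite (gen_matrices k n :: (nat \<Rightarrow> 'a::{zero,finite}) list set)"
  unfolding gen_matrices_def by (rule finite_lists_length_eq[OF finite_vecs])

lemma card_gen_matrices:
  "card (gen_matrices k n :: (nat \<Rightarrow> 'a::{zero,finite}) list set) = card (UNIV :: 'a set) ^ (n * k)"
  unfolding gen_matrices_def by (simp add: card_lists_length_eq[OF finite_vecs] card_vecs power_mult)

lemma finite_nonzero_vecs: "finite (nonzero_vecs k :: (nat \<Rightarrow> 'a::{zero,finite}) set)"
  unfolding nonzero_vecs_def using finite_vecs by simp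

lemma card_nonzero_vecs:
  "card (nonzero_vecs k :: (nat \<Rightarrow> 'a::{zero,finite}) set) = card (UNIV :: 'a set) ^ k - 1"
proof -
  have "(\<lambda>_. 0) \<in> (vecs k :: (nat \<Rightarrow> 'a) set)" by (simp add: vecs_def)
  then show ?thesis unfolding nonzero_vecs_def by (simp add: card_Diff_singleton finite_vecs card_vecs)
qed

lemma nonzero_vecsE:
  assumes "x \<in> nonzero_vecs k"
  obtains i where "i < k" "x i \<noteq> 0"
proof -
  have "x \<in> vecs k" "x \<noteq> (\<lambda>_. 0)" using assms by (auto simp: nonzero_vecs_def)
  then obtain i where "x i \<noteq> 0" by auto
  moreover have "i < k"
  proof (rule ccontr)
    assume "\<not> i < k"
    then show False using \<open>x \<in> vecs k\<close> \<open>x i \<noteq> 0\<close> unfolding vecs_def by simp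
  qed
  ultimately show ?thesis using that by blast
qed

lemma nonzero_vecsI: "x \<in> vecs k \<Longrightarrow> x \<noteq> (\<lambda>_. 0) \<Longrightarrow> x \<in> nonzero_vecs k"
  by (simp add: nonzero_vecs_def)

lemma length_remove_nth: "i < length xs \<Longrightarrow> length (remove_nth i xs) = length xs - 1"
  unfolding remove_nth_def by simp

lemma set_remove_nth_subset: "set (remove_nth i xs) \<subseteq> set xs"
  unfolding remove_nth_def using set_take_subset set_drop_subset by (metis Un_least set_append)

lemma nth_remove_nth:
  assumes "i0 < length xs" "i < length xs" "i \<noteq> i0"
  shows "xs ! i = (if i < i0 then remove_nth i0 xs ! i else remove_nth i0 xs ! (i - 1))"
  using assms unfolding remove_nth_def by (auto simp: nth_append min_def)

text \<open>For \<open>x i0 \<noteq> 0\<close>, a matrix is determined by \<open>lin_comb x G\<close> together with its other rows.\<close>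
lemma card_gen_matrices_lin_comb_le:
  fixes x :: "nat \<Rightarrow> 'a::{field,finite}"
  assumes "x i0 \<noteq> 0" "i0 < k"
  shows "card {G \<in> gen_matrices k n. P (lin_comb x G)}
    \<le> card {w \<in> vecs n. P w} * (card (UNIV :: 'a set) ^ n) ^ (k - 1)"
proof -
  define f where "f G = (lin_comb x G, remove_nth i0 G)" for G :: "(nat \<Rightarrow> 'a) list"
  define T where "T = {w \<in> vecs n. P w} \<times> {xs. set xs \<subseteq> (vecs n :: (nat \<Rightarrow> 'a) set) \<and> length xs = k - 1}"
  have "inj_on f {G \<in> gen_matrices k n. P (lin_comb x G)}"
  proof (rule inj_onI)
    fix G G' assume "G \<in> {G \<in> gen_matrices k n. P (lin_comb x G)}" "G' \<in> {G \<in> gen_matrices k n. P (lin_comb x G)}"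
      and eq: "f G = f G'"
    then have len: "length G = k" "length G' = k" by (auto simp: gen_matrices_def)
    have other: "G ! i = G' ! i" if "i < k" "i \<noteq> i0" for i
      using eq nth_remove_nth[of i0 G i] nth_remove_nth[of i0 G' i] that assms(2) len
      by (simp add: f_def)
    have "x i0 * (G ! i0) j = x i0 * (G' ! i0) j" for j
    proof -
      have "(\<Sum>i\<in>{..<k} - {i0}. x i * (G ! i) j) = (\<Sum>i\<in>{..<k} - {i0}. x i * (G' ! i) j)"
        by (rule sum.cong) (auto simp: other)
      moreover have "lin_comb x G j = lin_comb x G' j" using eq by (simp add: f_def)
      ultimately show ?thesis
        unfolding lin_comb_def len using assms(2) by (simp add: sum.remove)
    qed
    then have "G ! i0 = G' ! i0" using assms(1) by auto
    then show "G = G'" using other len by (metis nth_equalityI)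
  qed
  moreover have "f ` {G \<in> gen_matrices k n. P (lin_comb x G)} \<subseteq> T"
  proof
    fix y assume "y \<in> f ` {G \<in> gen_matrices k n. P (lin_comb x G)}"
    then obtain G where G: "set G \<subseteq> vecs n" "length G = k" "P (lin_comb x G)" "y = f G"
      unfolding gen_matrices_def by blast
    then show "y \<in> T"
      using lin_comb_in_vecs[OF G(1)] set_remove_nth_subset[of i0 G] length_remove_nth[of i0 G] assms(2)
      unfolding T_def f_def by auto
  qed
  moreover have "finite T" unfolding T_def
    by (intro finite_cartesian_product finite_lists_length_eq finite_vecs) (simp add: finite_vecs)
  ultimately have "card {G \<in> gen_matrices k n. P (lin_comb x G)} \<le> card T"
    using card_inj_on_le by blast
  also have "\<dots> = card {w \<in> vecs n. P w} * (card (UNIV :: 'a set) ^ n) ^ (k - 1)"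
    unfolding T_def by (simp add: card_cartesian_product card_lists_length_eq[OF finite_vecs] card_vecs)
  finally show ?thesis .
qed

lemma card_nonzero_multiples_le:
  fixes x0 :: "nat \<Rightarrow> 'a::{field,finite}"
  assumes "x0 \<in> nonzero_vecs k" and "\<And>l. l \<noteq> 0 \<Longrightarrow> P (\<lambda>i. l * x0 i)"
  shows "card (UNIV :: 'a set) - 1 \<le> card {x \<in> nonzero_vecs k. P x}"
proof -
  obtain i where i: "i < k" "x0 i \<noteq> 0" using assms(1) by (rule nonzero_vecsE)
  define h where "h l = (\<lambda>i. l * x0 i)" for l :: 'a
  have "h ` (UNIV - {0}) \<subseteq> {x \<in> nonzero_vecs k. P x}"
  proof
    fix y assume "y \<in> h ` (UNIV - {0})"
    then obtain l where l: "l \<noteq> 0" "y = h l" by blast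
    have "y \<in> vecs k" using assms(1) l unfolding nonzero_vecs_def vecs_def h_def by auto
    moreover have "y \<noteq> (\<lambda>_. 0)" using l i unfolding h_def by (metis mult_eq_0_iff)
    ultimately show "y \<in> {x \<in> nonzero_vecs k. P x}" using assms(2) l by (simp add: nonzero_vecsI h_def)
  qed
  moreover have "inj_on h (UNIV - {0})"
    using i(2) unfolding h_def by (intro inj_onI) (metis mult_right_cancel)
  ultimately have "card (UNIV - {0::'a}) \<le> card {x \<in> nonzero_vecs k. P x}"
    using card_inj_on_le[of h "UNIV - {0}" "{x \<in> nonzero_vecs k. P x}"]
      finite_nonzero_vecs[of k, where 'a='a] by auto
  then show ?thesis by (simp add: card_Diff_singleton)
qed

text \<open>Double counting of the pairs \<open>(x, G)\<close> with \<open>rk q n (lin_comb x G) \<le> d\<close>.\<close>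
lemma card_has_low_rank_comb_le:
  fixes d :: nat
  assumes "q > 0"
  defines "Q \<equiv> card (UNIV :: 'a::{field,finite} set)"
  shows "(Q - 1) * card {G \<in> gen_matrices k n. has_low_rank_comb q k n d (G :: (nat \<Rightarrow> 'a) list)}
     \<le> (Q ^ k - 1) * (card {w \<in> vecs n. rk q n (w :: nat \<Rightarrow> 'a) \<le> d} * (Q ^ n) ^ (k - 1))"
proof -
  define B where "B x G \<longleftrightarrow> rk q n (lin_comb x G) \<le> d" for x and G :: "(nat \<Rightarrow> 'a) list"
  define bad where "bad = {G \<in> gen_matrices k n. has_low_rank_comb q k n d (G :: (nat \<Rightarrow> 'a) list)}"
  define L where "L = card {w \<in> vecs n. rk q n (w :: nat \<Rightarrow> 'a) \<le> d}"
  have "Q - 1 \<le> card {x \<in> nonzero_vecs k. B x G}" if G: "G \<in> bad" for G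
  proof -
    obtain x0 where "x0 \<in> nonzero_vecs k" "B x0 G"
      using G unfolding bad_def has_low_rank_comb_def B_def by blast
    then show ?thesis unfolding Q_def
      by (intro card_nonzero_multiples_le) (simp_all add: B_def lin_comb_mult rk_mult)
  qed
  then have "(Q - 1) * card bad \<le> (\<Sum>G\<in>bad. card {x \<in> nonzero_vecs k. B x G})"
    using sum_mono[of bad "\<lambda>_. Q - 1"] by (simp add: mult.commute)
  also have "\<dots> \<le> (\<Sum>G\<in>gen_matrices k n. card {x \<in> nonzero_vecs k. B x G})"
    by (rule sum_mono2[OF finite_gen_matrices]) (auto simp: bad_def)
  also have "\<dots> = (\<Sum>x\<in>nonzero_vecs k. card {G \<in> gen_matrices k n. B x G})"
    using sum.swap_restrict[OF finite_gen_matrices finite_nonzero_vecs, where g="\<lambda>_ _. 1::nat" and R="\<lambda>G x. B x G"]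
    by simp
  also have "\<dots> \<le> (\<Sum>x\<in>(nonzero_vecs k :: (nat \<Rightarrow> 'a) set). L * (Q ^ n) ^ (k - 1))"
  proof (rule sum_mono)
    fix x :: "nat \<Rightarrow> 'a" assume "x \<in> nonzero_vecs k"
    then obtain i where "i < k" "x i \<noteq> 0" by (rule nonzero_vecsE)
    then show "card {G \<in> gen_matrices k n. B x G} \<le> L * (Q ^ n) ^ (k - 1)"
      unfolding B_def Q_def L_def by (intro card_gen_matrices_lin_comb_le)
  qed
  also have "\<dots> = (Q ^ k - 1) * (L * (Q ^ n) ^ (k - 1))"
    by (simp add: card_nonzero_vecs Q_def)
  finally show ?thesis unfolding bad_def L_def .
qed

lemma card_has_low_rank_comb_le_gauss_binom:
  assumes "q \<ge> 2" "k \<ge> 1" "k \<le> n"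
  defines "Q \<equiv> real (card (UNIV :: 'a::{field,finite} set))"
  shows "(Q - 1) * card {G \<in> gen_matrices k n. has_low_rank_comb q k n (n - k) (G :: (nat \<Rightarrow> 'a) list)}
    \<le> gauss_binom q n k * Q ^ (n * k)"
proof -
  define bad where "bad = {G \<in> gen_matrices k n. has_low_rank_comb q k n (n - k) (G :: (nat \<Rightarrow> 'a) list)}"
  define L where "L = card {w \<in> vecs n. rk q n (w :: nat \<Rightarrow> 'a) \<le> n - k}"
  have "real ((card (UNIV :: 'a set) - 1) * card bad)
      \<le> real ((card (UNIV :: 'a set) ^ k - 1) * (L * (card (UNIV :: 'a set) ^ n) ^ (k - 1)))"
    unfolding bad_def L_def using assms(1) by (intro of_nat_mono card_has_low_rank_comb_le) simp
  moreover have "card (UNIV :: 'a set) \<ge> 1" "card (UNIV :: 'a set) ^ k \<ge> 1"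
    using card_UNIV_field_ge_2[where 'a='a] by (auto simp: one_le_power)
  ultimately have "(Q - 1) * card bad \<le> (Q ^ k - 1) * (L * Q ^ (n * (k - 1)))"
    unfolding Q_def by (simp add: of_nat_diff power_mult)
  also have "\<dots> \<le> Q ^ k * (gauss_binom q n k * Q ^ (n - k) * Q ^ (n * (k - 1)))"
  proof (intro mult_mono mult_right_mono)
    have "gauss_binom q n (n - k) = gauss_binom q n k" using gauss_binom_symmetric[OF assms(1,3)] .
    then show "real L \<le> gauss_binom q n k * Q ^ (n - k)"
      using card_rk_le[OF assms(1), of "n - k" n, where 'a='a] unfolding L_def Q_def by simp
  qed (use gauss_binom_nonneg[of q n k] assms(1) in \<open>simp_all add: Q_def\<close>)
  also have "\<dots> = gauss_binom q n k * Q ^ (n * k)"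
  proof -
    have "k + (n - k) + n * (k - 1) = n * k" using assms(2,3) by (cases k) auto
    then have "Q ^ k * Q ^ (n - k) * Q ^ (n * (k - 1)) = Q ^ (n * k)"
      unfolding power_add[symmetric] by simp
    then show ?thesis by (simp add: mult_ac)
  qed
  finally show ?thesis unfolding bad_def .
qed

text \<open>Singleton bound in coefficient form: some nonzero combination vanishes on the first
  \<open>k - 1\<close> coordinates, by pigeonhole on the \<open>Q\<^sup>k\<close> coefficient vectors.\<close>
lemma exists_lin_comb_rk_le:
  fixes G :: "(nat \<Rightarrow> 'a::{field,finite}) list"
  assumes "q > 0" "length G \<ge> 1"
  shows "\<exists>y\<in>nonzero_vecs (length G). rk q n (lin_comb y G) \<le> n + 1 - length G"
proof -
  define k where "k = length G"
  define restr where "restr x = (\<lambda>j. if j < k - 1 then lin_comb x G j else 0)" for x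
  have "\<not> inj_on restr (vecs k)"
  proof
    assume "inj_on restr (vecs k)"
    moreover have "restr ` vecs k \<subseteq> vecs (k - 1)" by (auto simp: restr_def vecs_def)
    ultimately have "card (vecs k :: (nat \<Rightarrow> 'a) set) \<le> card (vecs (k - 1) :: (nat \<Rightarrow> 'a) set)"
      using card_inj_on_le[OF _ _ finite_vecs] by blast
    moreover have "card (UNIV :: 'a set) ^ (k - 1) < card (UNIV :: 'a set) ^ k"
      using card_UNIV_field_ge_2[where 'a='a] assms(2) unfolding k_def
      by (intro power_strict_increasing) auto
    ultimately show False by (simp add: card_vecs)
  qed
  then obtain x x' where x: "x \<in> vecs k" "x' \<in> vecs k" "x \<noteq> x'" "restr x = restr x'"
    unfolding inj_on_def by blast
  define y where "y i = x i - x' i" for i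
  have "y \<noteq> (\<lambda>_. 0)" using x(3) by (auto simp: y_def fun_eq_iff)
  then have y: "y \<in> nonzero_vecs k" using x(1,2) by (intro nonzero_vecsI) (simp add: y_def vecs_def)
  have "lin_comb y G j = 0" if "j < k - 1" for j
    using fun_cong[OF x(4), of j] that unfolding y_def lin_comb_diff by (simp add: restr_def)
  then have "{j \<in> {..<n}. lin_comb y G j \<noteq> 0} \<subseteq> {k - 1..<n}"
    by (auto simp flip: not_less)
  then have "card {j \<in> {..<n}. lin_comb y G j \<noteq> 0} \<le> card {k - 1..<n}"
    by (rule card_mono[rotated]) simp
  also have "\<dots> = n + 1 - k" using assms(2) unfolding k_def by simp
  finally have "card {j \<in> {..<n}. lin_comb y G j \<noteq> 0} \<le> n + 1 - k" .
  then have "rk q n (lin_comb y G) \<le> n + 1 - k"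
    using rk_le_card_support[OF assms(1), of n "lin_comb y G"] by linarith
  then show ?thesis using y unfolding k_def by blast
qed

lemma vspan_diff_obtain:
  assumes "u \<in> vspan G" "v \<in> vspan G"
  obtains y where "y \<in> vecs (length G)" "lin_comb y G = (\<lambda>j. u j - v j)"
proof -
  obtain c c' where "c \<in> vecs (length G)" "c' \<in> vecs (length G)" "u = lin_comb c G" "v = lin_comb c' G"
    using assms unfolding vspan_eq_image_lin_comb by blast
  then show ?thesis using that[of "\<lambda>i. c i - c' i"] by (auto simp: vecs_def lin_comb_diff)
qed

lemma vindepI_lin_comb:
  assumes "\<And>y. y \<in> nonzero_vecs (length G) \<Longrightarrow> lin_comb y G \<noteq> (\<lambda>_. 0)"
  shows "vindep G"
  unfolding vindep_def
proof (intro allI impI)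
  fix c and i
  assume "(\<lambda>j. \<Sum>i<length G. c i * (G ! i) j) = (\<lambda>j. 0)" "i < length G"
  moreover define y where "y i = (if i < length G then c i else 0)" for i
  ultimately have "lin_comb y G = (\<lambda>_. 0)" "y \<in> vecs (length G)"
    using lin_comb_cong[of G y c] by (auto simp: lin_comb_def y_def vecs_def)
  then have "y = (\<lambda>_. 0)" using assms nonzero_vecsI by blast
  then have "y i = 0" by simp
  then show "c i = 0" using \<open>i < length G\<close> by (simp add: y_def)
qed

lemma is_MRD_vspan:
  fixes G :: "(nat \<Rightarrow> 'a::{field,finite}) list"
  assumes "q > 0" "G \<in> gen_matrices k n" "k \<ge> 1" "k \<le> n"
    and no_low_rank: "\<not> has_low_rank_comb q k n (n - k) G"
  shows "is_MRD q n k (vspan G)"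
proof -
  have G: "length G = k" "set G \<subseteq> vecs n" using assms(2) by (auto simp: gen_matrices_def)
  have high: "n - k < rk q n (lin_comb y G)" if "y \<in> nonzero_vecs k" for y
    using no_low_rank that unfolding has_low_rank_comb_def by (meson not_le)
  have nonzero: "lin_comb y G \<noteq> (\<lambda>_. 0)" if "y \<in> nonzero_vecs k" for y
    using high[OF that] rk_zero[OF assms(1), of n, where 'a='a] by auto
  then have "vindep G" using G(1) by (intro vindepI_lin_comb) auto
  then have "is_linear_code n k (vspan G)" unfolding is_linear_code_def using G by blast
  define D where "D = {rk q n (\<lambda>j. u j - v j) | u v. u \<in> vspan G \<and> v \<in> vspan G \<and> u \<noteq> v}"
  have lower: "n - k + 1 \<le> r" if r: "r \<in> D" for r
  proof -
    obtain u v where uv: "r = rk q n (\<lambda>j. u j - v j)" "u \<in> vspan G" "v \<in> vspan G" "u \<noteq> v"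
      using r unfolding D_def by blast
    obtain y where y: "y \<in> vecs k" "lin_comb y G = (\<lambda>j. u j - v j)"
      using vspan_diff_obtain[OF uv(2,3)] G(1) by blast
    have "y \<noteq> (\<lambda>_. 0)"
    proof
      assume "y = (\<lambda>_. 0)"
      then have "u j - v j = 0" for j using fun_cong[OF y(2), of j] lin_comb_zero[of G] by simp
      then show False using uv(4) by (simp add: fun_eq_iff)
    qed
    then show ?thesis using high[OF nonzero_vecsI[OF y(1)]] y(2) uv(1) by simp
  qed
  obtain y where y: "y \<in> nonzero_vecs k" "rk q n (lin_comb y G) \<le> n + 1 - k"
    using exists_lin_comb_rk_le[OF assms(1)] assms(3) G(1) by blast
  have "lin_comb y G \<in> vspan G" "(\<lambda>_. 0) \<in> vspan G"
    unfolding vspan_eq_lin_comb using lin_comb_zero[of G, symmetric] by auto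
  moreover have "lin_comb y G \<noteq> (\<lambda>_. 0)" by (rule nonzero[OF y(1)])
  ultimately have "rk q n (lin_comb y G) \<in> D"
    unfolding D_def by (intro CollectI exI[of _ "lin_comb y G"] exI[of _ "\<lambda>_. 0"]) simp
  moreover have "rk q n (lin_comb y G) = n - k + 1" using high[OF y(1)] y(2) assms(4) by simp
  moreover have "finite D" by (rule finite_subset[of _ "{..n}"]) (auto simp: D_def rk_le)
  ultimately have "min_rank_dist q n (vspan G) = n - k + 1"
    unfolding min_rank_dist_def D_def[symmetric] using lower by (intro Min_eqI) auto
  then show ?thesis unfolding is_MRD_def using \<open>is_linear_code n k (vspan G)\<close> by simp
qed

section \<open>Generalized Gabidulin codes\<close>

definition gabidulin_rows :: "nat \<Rightarrow> nat \<Rightarrow> nat \<Rightarrow> nat \<Rightarrow> (nat \<Rightarrow> 'a::field) \<Rightarrow> (nat \<Rightarrow> 'a) list" where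
  "gabidulin_rows q n k s g = map (\<lambda>i j. if j < n then g j ^ (q ^ (s * i)) else 0) [0..<k]"

definition prepend_one :: "(nat \<Rightarrow> 'a::one) \<Rightarrow> nat \<Rightarrow> 'a" where
  "prepend_one h j = (if j = 0 then 1 else h (j - 1))"

lemma card_gen_matrices_set_subset_vspan_le:
  fixes B :: "(nat \<Rightarrow> 'a::{field,finite}) list"
  shows "card {G \<in> gen_matrices k n. set G \<subseteq> vspan B} \<le> (card (UNIV :: 'a set) ^ length B) ^ k"
proof -
  have "card {G \<in> gen_matrices k n. set G \<subseteq> vspan B} \<le> card {xs. set xs \<subseteq> vspan B \<and> length xs = k}"
    by (rule card_mono) (auto simp: gen_matrices_def finite_lists_length_eq finite_vspan)
  also have "\<dots> = card (vspan B) ^ k" by (simp add: card_lists_length_eq finite_vspan)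
  also have "\<dots> \<le> (card (UNIV :: 'a set) ^ length B) ^ k" by (simp add: card_vspan_le power_mono)
  finally show ?thesis .
qed

text \<open>Dividing \<open>g\<close> by \<open>g 0\<close> rescales row \<open>i\<close> by the scalar \<open>g 0 ^ q ^ (s * i)\<close>, and \<open>s\<close> only
  matters modulo \<open>m\<close>; \<open>s mod m \<noteq> 0\<close> because \<open>s\<close> is coprime to \<open>m \<ge> 2\<close>.\<close>
lemma gen_gabidulin_subset_vspan:
  fixes C :: "(nat \<Rightarrow> 'a::{field,finite}) set"
  assumes card: "card (UNIV :: 'a set) = q ^ m" and "m \<ge> 2" "q > 0" "n \<ge> 1"
    and "gen_gabidulin q m n k C"
  shows "\<exists>s\<in>{1..<m}. \<exists>h\<in>vecs (n - 1). C \<subseteq> vspan (gabidulin_rows q n k s (prepend_one h))"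
proof -
  obtain s and g :: "nat \<Rightarrow> 'a" where "coprime s m" and indep: "lin_indep_on (Fsub q) {..<n} g"
    and C: "C = vspan (gabidulin_rows q n k s g)"
    using assms(5) unfolding gen_gabidulin_def gabidulin_rows_def by blast
  have "g 0 \<noteq> 0" using lin_indep_on_nonzero[OF indep _ _ assms(3)] assms(4) by simp
  define s' where "s' = s mod m"
  have "s' \<noteq> 0"
  proof
    assume "s' = 0"
    then have "m dvd s" unfolding s'_def by auto
    then show False using \<open>coprime s m\<close> assms(2) by auto
  qed
  moreover have "s' < m" unfolding s'_def using assms(2) by simp
  ultimately have "s' \<in> {1..<m}" by simp
  define h where "h j = (if j < n - 1 then g (Suc j) / g 0 else 0)" for j
  have "h \<in> vecs (n - 1)" by (simp add: vecs_def h_def)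
  have rescale: "g j ^ (q ^ (s * i)) = g 0 ^ (q ^ (s' * i)) * prepend_one h j ^ (q ^ (s' * i))"
    if "j < n" for i j
  proof (cases "j = 0")
    case False
    then have "prepend_one h j = g j / g 0" using that by (simp add: prepend_one_def h_def)
    then show ?thesis using \<open>g 0 \<noteq> 0\<close> finite_field_power_power_mod[OF card, of "g j" s i]
      by (simp add: s'_def power_divide)
  qed (use finite_field_power_power_mod[OF card, of "g 0" s i] in \<open>simp add: prepend_one_def s'_def\<close>)
  have "C \<subseteq> vspan (gabidulin_rows q n k s' (prepend_one h))"
  proof
    fix v assume "v \<in> C"
    then obtain c where "v = lin_comb c (gabidulin_rows q n k s g)"
      unfolding C vspan_eq_lin_comb by blast
    then have "v = lin_comb (\<lambda>i. c i * g 0 ^ (q ^ (s' * i))) (gabidulin_rows q n k s' (prepend_one h))"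
      unfolding lin_comb_def gabidulin_rows_def using rescale by (auto intro!: sum.cong simp: mult.assoc)
    then show "v \<in> vspan (gabidulin_rows q n k s' (prepend_one h))" by (auto simp: vspan_eq_lin_comb)
  qed
  with \<open>s' \<in> {1..<m}\<close> \<open>h \<in> vecs (n - 1)\<close> show ?thesis by blast
qed

lemma card_gen_gabidulin_le:
  assumes "card (UNIV :: 'a::{field,finite} set) = q ^ m" "m \<ge> 2" "q > 0" "n \<ge> 1"
  shows "card {G \<in> gen_matrices k n. gen_gabidulin q m n k (vspan (G :: (nat \<Rightarrow> 'a) list))}
     \<le> (m - 1) * card (UNIV :: 'a set) ^ (n - 1) * (card (UNIV :: 'a set) ^ k) ^ k"
proof -
  define P where "P = {1..<m} \<times> (vecs (n - 1) :: (nat \<Rightarrow> 'a) set)"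
  define A where "A p = {G \<in> gen_matrices k n. set G \<subseteq> vspan (gabidulin_rows q n k (fst p) (prepend_one (snd p)))}"
    for p :: "nat \<times> (nat \<Rightarrow> 'a)"
  have "{G \<in> gen_matrices k n. gen_gabidulin q m n k (vspan G)} \<subseteq> (\<Union>p\<in>P. A p)"
  proof
    fix G :: "(nat \<Rightarrow> 'a) list" assume G: "G \<in> {G \<in> gen_matrices k n. gen_gabidulin q m n k (vspan G)}"
    then obtain s h where "s \<in> {1..<m}" "h \<in> vecs (n - 1)"
        "vspan G \<subseteq> vspan (gabidulin_rows q n k s (prepend_one h))"
      using gen_gabidulin_subset_vspan[OF assms] by blast
    then show "G \<in> (\<Union>p\<in>P. A p)"
      using G set_subset_vspan[of G] unfolding A_def P_def by (intro UN_I[of "(s, h)"]) auto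
  qed
  moreover have "finite P" unfolding P_def by (simp add: finite_vecs)
  moreover have "finite (\<Union>p\<in>P. A p)"
    using \<open>finite P\<close> finite_gen_matrices[of k n, where 'a='a] unfolding A_def by auto
  ultimately have "card {G \<in> gen_matrices k n. gen_gabidulin q m n k (vspan (G :: (nat \<Rightarrow> 'a) list))}
      \<le> card (\<Union>p\<in>P. A p)"
    by (simp add: card_mono)
  also have "\<dots> \<le> (\<Sum>p\<in>P. card (A p))" by (rule card_UN_le[OF \<open>finite P\<close>])
  also have "\<dots> \<le> (\<Sum>p\<in>P. (card (UNIV :: 'a set) ^ k) ^ k)"
    unfolding A_def
    by (rule sum_mono, rule order_trans[OF card_gen_matrices_set_subset_vspan_le]) (simp add: gabidulin_rows_def)
  also have "\<dots> = (m - 1) * card (UNIV :: 'a set) ^ (n - 1) * (card (UNIV :: 'a set) ^ k) ^ k"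
    unfolding P_def by (simp add: card_cartesian_product card_vecs)
  finally show ?thesis .
qed

section \<open>The bound inequality\<close>

definition bound_sum :: "nat \<Rightarrow> nat \<Rightarrow> nat \<Rightarrow> real" where
  "bound_sum q k n = (\<Sum>r = 0..k. real r * gauss_binom q k (k - r) * gauss_binom q (n - k) r * real q ^ (r ^ 2))"

lemma bound_ineq_iff:
  assumes "m \<ge> 1" "k \<ge> 1" "k + 1 \<le> n"
  shows "bound_ineq q k n m \<longleftrightarrow>
    bound_sum q k n / real q ^ m + (real m - 1) / real q ^ ((m - 1) * ((n - k - 1) * (k - 1))) < 1"
proof -
  have exponent: "(int m - 1) * (int n - int k - 1) * (int k - 1) = int ((m - 1) * ((n - k - 1) * (k - 1)))"
    using assms by (simp add: of_nat_diff mult.assoc)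
  have "real q powi (- ((int m - 1) * (int n - int k - 1) * (int k - 1)))
      = 1 / real q ^ ((m - 1) * ((n - k - 1) * (k - 1)))"
    unfolding exponent power_int_minus power_int_of_nat by (simp add: divide_inverse)
  moreover have "(\<Sum>r = 0..k. real r * gauss_binom q k (k - r) * gauss_binom q (n - k) r
        * real q ^ (r ^ 2) * real q powi (- int m)) = bound_sum q k n / real q ^ m"
    unfolding bound_sum_def by (simp add: power_int_minus power_int_of_nat divide_inverse sum_distrib_right)
  ultimately show ?thesis unfolding bound_ineq_def by auto
qed

text \<open>By the \<open>q\<close>-Vandermonde identity \<open>[n, k]\<^sub>q\<close> is the unweighted version of the sum; the weights
  \<open>r\<close> gain at least the term \<open>r = 2\<close> and lose the term \<open>r = 0\<close>.\<close>
lemma gauss_binom_le_bound_sum: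
  assumes q: "q \<ge> 2" and "k \<ge> 2" "k + 2 \<le> n"
  shows "gauss_binom q n k + real q ^ 4 - 1 \<le> bound_sum q k n"
proof -
  define N where "N r = gauss_binom q k (k - r) * gauss_binom q (n - k) r * real q ^ (r ^ 2)" for r
  have N0: "N r \<ge> 0" for r unfolding N_def using gauss_binom_nonneg[of q] q by simp
  have "gauss_binom q (k + (n - k)) k = (\<Sum>r = 0..k. N r)"
    unfolding gauss_binom_vandermonde[OF q] N_def by (simp add: power2_eq_square)
  then have "bound_sum q k n - gauss_binom q n k = (\<Sum>r = 0..k. (real r - 1) * N r)"
    using assms(3) unfolding bound_sum_def N_def
    by (simp add: sum_subtractf left_diff_distrib mult.assoc)
  also have "\<dots> \<ge> (\<Sum>r \<in> {0, 2}. (real r - 1) * N r)"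
    using assms(2) N0 by (intro sum_mono2) (auto simp: Suc_le_eq)
  moreover have "N 0 = 1" unfolding N_def using gauss_binom_self[OF q] by simp
  moreover have "N 2 \<ge> real q ^ 4"
  proof -
    have "gauss_binom q k (k - 2) * gauss_binom q (n - k) 2 \<ge> 1 * 1"
      using gauss_binom_ge_1[OF q] gauss_binom_nonneg[of q] q assms(3) by (intro mult_mono) auto
    then show ?thesis unfolding N_def by (simp add: mult_le_cancel_right1)
  qed
  ultimately show ?thesis by simp
qed

lemma divide_power_antimono:
  assumes "q \<ge> 2" "c \<ge> 1" "1 \<le> i" "i \<le> j"
  shows "real j / real q ^ (j * c) \<le> real i / real q ^ (i * c)"
  using assms(4)
proof (induction j rule: dec_induct)
  case (step l)
  have "real q ^ 1 \<le> real q ^ c" using assms(1,2) by (intro power_increasing) auto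
  then have "2 \<le> real q ^ c" using assms(1) by (simp only: power_one_right)
  then have "real l * 2 \<le> real l * real q ^ c" by (intro mult_left_mono) auto
  moreover have "1 \<le> real l" using assms(3) step.hyps by simp
  ultimately have "real (Suc l) \<le> real l * real q ^ c" by linarith
  then have "real (Suc l) / (real q ^ (l * c) * real q ^ c) \<le> real l * real q ^ c / (real q ^ (l * c) * real q ^ c)"
    using assms(1) by (intro divide_right_mono) auto
  also have "\<dots> = real l / real q ^ (l * c)" using assms(1) by simp
  also have "real q ^ (l * c) * real q ^ c = real q ^ (Suc l * c)" by (simp add: power_add mult.commute)
  finally have "real (Suc l) / real q ^ (Suc l * c) \<le> real l / real q ^ (l * c)" .
  then show ?case using step.IH by linarith
qed simp

lemma bound_ineq_exists:
  assumes q: "q \<ge> 2" and "k \<ge> 2" "k + 2 \<le> n"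
  shows "\<exists>m. 0 < m \<and> bound_ineq q k n m"
proof -
  define c where "c = (n - k - 1) * (k - 1)"
  have "c \<ge> 1" unfolding c_def using assms(2,3) by (simp add: Suc_le_eq)
  obtain m0 :: nat where m0: "real m0 > 2 * bound_sum q k n" using reals_Archimedean2 by blast
  define m where "m = m0 + 2"
  have "real m < real q ^ m"
    using of_nat_less_two_power[of m, where 'a=real] power_mono[of 2 "real q" m] q by linarith
  then have "bound_sum q k n / real q ^ m < 1 / 2" using m0 q by (simp add: m_def divide_less_eq)
  moreover have "(real m - 1) / real q ^ ((m - 1) * c) \<le> 1 / real q ^ (1 * c)"
    using divide_power_antimono[OF q \<open>c \<ge> 1\<close>, of 1 "m - 1"] by (simp add: m_def)
  moreover have "1 / real q ^ (1 * c) \<le> 1 / 2"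
  proof -
    have "real q ^ 1 \<le> real q ^ c" using q \<open>c \<ge> 1\<close> by (intro power_increasing) auto
    then have "2 \<le> real q ^ c" using q by (simp only: power_one_right)
    then show ?thesis by (simp add: divide_simps)
  qed
  ultimately have "bound_sum q k n / real q ^ m + (real m - 1) / real q ^ ((m - 1) * c) < 1"
    by linarith
  moreover have "bound_ineq q k n m \<longleftrightarrow>
      bound_sum q k n / real q ^ m + (real m - 1) / real q ^ ((m - 1) * c) < 1"
    unfolding c_def by (rule bound_ineq_iff) (use assms in \<open>auto simp: m_def\<close>)
  ultimately have "bound_ineq q k n m" by blast
  then show ?thesis by (intro exI[of _ m]) (simp add: m_def)
qed

lemma bound_ineq_imp_bound_sum_less:
  assumes "bound_ineq q k n m" "m \<ge> 1" "k \<ge> 1" "k + 1 \<le> n" "q \<ge> 2"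
  shows "bound_sum q k n < real q ^ m"
proof -
  have "(real m - 1) / real q ^ ((m - 1) * ((n - k - 1) * (k - 1))) \<ge> 0" using assms(2) by simp
  then have "bound_sum q k n / real q ^ m < 1" using assms(1-4) bound_ineq_iff[of m k n q] by linarith
  then show ?thesis using assms(5) by (simp add: divide_less_eq)
qed

lemma bound_ineq_mono:
  assumes q: "q \<ge> 2" and "k \<ge> 2" "k + 2 \<le> n" and "bound_ineq q k n M" "1 \<le> M" "M \<le> m"
  shows "bound_ineq q k n m" and "M \<ge> 2"
proof -
  define c where "c = (n - k - 1) * (k - 1)"
  have "c \<ge> 1" unfolding c_def using assms(2,3) by (simp add: Suc_le_eq)
  have "real q ^ 1 \<le> real q ^ 4" using q by (intro power_increasing) auto
  moreover have "gauss_binom q n k \<ge> 1" using gauss_binom_ge_1[OF q, of k n] assms(3) by simp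
  ultimately have "real q \<le> bound_sum q k n"
    using gauss_binom_le_bound_sum[OF assms(1-3)] by (simp only: power_one_right)
  then show "M \<ge> 2"
    using bound_ineq_imp_bound_sum_less[OF assms(4,5)] assms(2,3,5) q by (cases "M = 1") auto
  have "bound_sum q k n / real q ^ m \<le> bound_sum q k n / real q ^ M"
    using q assms(6) \<open>real q \<le> bound_sum q k n\<close>
    by (intro divide_left_mono power_increasing) auto
  moreover have "real (m - 1) / real q ^ ((m - 1) * c) \<le> real (M - 1) / real q ^ ((M - 1) * c)"
    using \<open>M \<ge> 2\<close> assms(6) by (intro divide_power_antimono[OF q \<open>c \<ge> 1\<close>]) auto
  ultimately show "bound_ineq q k n m"
    using assms(4-6) \<open>M \<ge> 2\<close> bound_ineq_iff[of M k n q] bound_ineq_iff[of m k n q] assms(2,3)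
    by (simp add: c_def of_nat_diff)
qed

lemma card_gen_gabidulin_le_fraction:
  assumes card: "card (UNIV :: 'a::{field,finite} set) = q ^ m" and "m \<ge> 2" "q \<ge> 2" "k \<ge> 1" "k + 1 \<le> n"
  shows "real (card {G \<in> gen_matrices k n. gen_gabidulin q m n k (vspan (G :: (nat \<Rightarrow> 'a) list))})
    \<le> (real m - 1) / real q ^ ((m - 1) * ((n - k - 1) * (k - 1))) * (real q ^ m) ^ (n * k)"
proof -
  define c where "c = (n - k - 1) * (k - 1)"
  have "n * k = (n - 1 + k * k) + c"
  proof -
    obtain a b where "n = k + 1 + a" "k = b + 1" using assms(4,5) by (metis add.commute le_add_diff_inverse)
    then show ?thesis unfolding c_def by (simp add: algebra_simps)
  qed
  then have "m * (n - 1 + k * k) + (m - 1) * c \<le> m * (n * k)" by (simp add: algebra_simps)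
  then have "real q ^ (m * (n - 1 + k * k)) * real q ^ ((m - 1) * c) \<le> (real q ^ m) ^ (n * k)"
    using assms(3) by (simp add: power_add[symmetric] power_mult[symmetric] power_increasing)
  then have "real q ^ (m * (n - 1 + k * k)) \<le> (real q ^ m) ^ (n * k) / real q ^ ((m - 1) * c)"
    using assms(3) by (simp add: pos_le_divide_eq)
  then have bound: "(real m - 1) * real q ^ (m * (n - 1 + k * k))
      \<le> (real m - 1) / real q ^ ((m - 1) * c) * (real q ^ m) ^ (n * k)"
    using assms(2) mult_left_mono[of _ _ "real m - 1"] by fastforce
  have exp: "(q ^ m) ^ (n - 1) * ((q ^ m) ^ k) ^ k = q ^ (m * (n - 1 + k * k))"
    unfolding power_mult[symmetric] power_add[symmetric] by (simp add: algebra_simps)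
  have "card {G \<in> gen_matrices k n. gen_gabidulin q m n k (vspan (G :: (nat \<Rightarrow> 'a) list))}
      \<le> (m - 1) * card (UNIV :: 'a set) ^ (n - 1) * (card (UNIV :: 'a set) ^ k) ^ k"
    by (rule card_gen_gabidulin_le[OF card]) (use assms in auto)
  also have "\<dots> = (m - 1) * q ^ (m * (n - 1 + k * k))"
    unfolding card by (simp only: mult.assoc exp)
  finally have "card {G \<in> gen_matrices k n. gen_gabidulin q m n k (vspan (G :: (nat \<Rightarrow> 'a) list))}
      \<le> (m - 1) * q ^ (m * (n - 1 + k * k))" .
  then have "real (card {G \<in> gen_matrices k n. gen_gabidulin q m n k (vspan (G :: (nat \<Rightarrow> 'a) list))})
      \<le> real ((m - 1) * q ^ (m * (n - 1 + k * k)))"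
    by (simp only: of_nat_le_iff)
  also have "\<dots> = (real m - 1) * real q ^ (m * (n - 1 + k * k))"
    using assms(2) by (simp add: of_nat_diff)
  finally have "real (card {G \<in> gen_matrices k n. gen_gabidulin q m n k (vspan (G :: (nat \<Rightarrow> 'a) list))})
      \<le> (real m - 1) * real q ^ (m * (n - 1 + k * k))" .
  with bound show ?thesis unfolding c_def by linarith
qed

lemma card_has_low_rank_comb_le_fraction:
  assumes card: "card (UNIV :: 'a::{field,finite} set) = q ^ m"
    and "q \<ge> 2" "k \<ge> 1" "k \<le> n" "gauss_binom q n k + 1 \<le> S" "S < real q ^ m"
  shows "real (card {G \<in> gen_matrices k n. has_low_rank_comb q k n (n - k) (G :: (nat \<Rightarrow> 'a) list)})
    \<le> S / real q ^ m * (real q ^ m) ^ (n * k)"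
proof -
  define Q where "Q = real q ^ m"
  define H where "H = gauss_binom q n k"
  have "Q > 1" using assms(5,6) gauss_binom_nonneg[of q n k] assms(2) unfolding H_def Q_def by linarith
  have "H / (Q - 1) \<le> S / Q"
  proof -
    have "Q * (S - H) \<ge> Q * 1" using assms(5) \<open>Q > 1\<close> unfolding H_def by (intro mult_left_mono) auto
    then have "H * Q \<le> S * (Q - 1)" using assms(6) unfolding Q_def by (simp add: algebra_simps)
    then show ?thesis using \<open>Q > 1\<close> by (simp add: field_simps)
  qed
  have "(Q - 1) * card {G \<in> gen_matrices k n. has_low_rank_comb q k n (n - k) (G :: (nat \<Rightarrow> 'a) list)}
      \<le> H * Q ^ (n * k)"
    using card_has_low_rank_comb_le_gauss_binom[OF assms(2-4), where 'a='a] card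
    unfolding H_def Q_def by simp
  then have "card {G \<in> gen_matrices k n. has_low_rank_comb q k n (n - k) (G :: (nat \<Rightarrow> 'a) list)}
      \<le> H / (Q - 1) * Q ^ (n * k)"
    using \<open>Q > 1\<close> by (simp add: field_simps)
  also have "\<dots> \<le> S / Q * Q ^ (n * k)"
    using \<open>H / (Q - 1) \<le> S / Q\<close> \<open>Q > 1\<close> by (intro mult_right_mono) auto
  finally show ?thesis unfolding Q_def .
qed

lemma exists_MRD_not_gen_gabidulin:
  assumes card: "card (UNIV :: 'a::{field,finite} set) = q ^ m"
    and q: "q \<ge> 2" and k: "k \<ge> 2" and n: "k + 2 \<le> n" and m: "m \<ge> 2" and "bound_ineq q k n m"
  shows "\<exists>C :: (nat \<Rightarrow> 'a) set. is_MRD q n k C \<and> \<not> gen_gabidulin q m n k C"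
proof -
  define Q where "Q = real q ^ m"
  define S where "S = bound_sum q k n"
  define F where "F = (real m - 1) / real q ^ ((m - 1) * ((n - k - 1) * (k - 1)))"
  define bad where "bad = {G \<in> gen_matrices k n. has_low_rank_comb q k n (n - k) (G :: (nat \<Rightarrow> 'a) list)}"
  define gab where "gab = {G \<in> gen_matrices k n. gen_gabidulin q m n k (vspan (G :: (nat \<Rightarrow> 'a) list))}"
  have "S / Q + F < 1"
    using \<open>bound_ineq q k n m\<close> bound_ineq_iff[of m k n q] k n m unfolding S_def Q_def F_def by simp
  have "S < Q" using bound_ineq_imp_bound_sum_less[OF \<open>bound_ineq q k n m\<close>] k n m q
    unfolding S_def Q_def by simp
  have "gauss_binom q n k + 1 \<le> S"
  proof -
    have "real q ^ 4 \<ge> 2 ^ 4" using q by (intro power_mono) auto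
    then show ?thesis using gauss_binom_le_bound_sum[OF q k n] unfolding S_def by simp
  qed
  then have "card bad \<le> S / Q * Q ^ (n * k)"
    using card_has_low_rank_comb_le_fraction[OF card q] \<open>S < Q\<close> k n unfolding bad_def Q_def by simp
  moreover have "card gab \<le> F * Q ^ (n * k)"
    unfolding gab_def Q_def F_def using card_gen_gabidulin_le_fraction[OF card m q] k n by simp
  ultimately have "card bad + card gab < Q ^ (n * k)"
    using \<open>S / Q + F < 1\<close> mult_strict_right_mono[of "S / Q + F" 1 "Q ^ (n * k)"] q
    unfolding Q_def by (simp add: distrib_right)
  also have "Q ^ (n * k) = card (gen_matrices k n :: (nat \<Rightarrow> 'a) list set)"
    unfolding card_gen_matrices card Q_def by (simp add: power_mult)
  finally have "card (bad \<union> gab) < card (gen_matrices k n :: (nat \<Rightarrow> 'a) list set)"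
    using card_Un_le[of bad gab] by linarith
  then have "\<not> gen_matrices k n \<subseteq> bad \<union> gab"
    using card_mono[of "bad \<union> gab" "gen_matrices k n :: (nat \<Rightarrow> 'a) list set"]
    by (auto simp: bad_def gab_def finite_gen_matrices)
  then obtain G where G: "G \<in> gen_matrices k n" "G \<notin> bad" "G \<notin> gab" by blast
  have "is_MRD q n k (vspan G)"
    by (rule is_MRD_vspan[OF _ G(1)]) (use G k n q in \<open>auto simp: bad_def\<close>)
  with G(1,3) show ?thesis unfolding gab_def by blast
qed

theorem theorem4p12:
  fixes q k n m :: nat
  assumes "\<exists>p e. prime p \<and> 0 < e \<and> q = p ^ e"
    and "1 < k" and "k + 1 < n"
    and "card (UNIV :: 'a::{field,finite} set) = q ^ m"
  shows "(\<exists>m'. 0 < m' \<and> bound_ineq q k n m') \<and>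
         (m \<ge> M_bound q k n \<longrightarrow>
            (\<exists>C :: (nat \<Rightarrow> 'a) set. is_MRD q n k C \<and> \<not> gen_gabidulin q m n k C))"
proof -
  obtain p e where p: "prime p" "0 < e" "q = p ^ e" using assms(1) by blast
  then have "p ^ 1 \<le> q" using prime_gt_0_nat[OF p(1)] by (simp only: p(3), intro power_increasing) auto
  then have q: "q \<ge> 2" using prime_ge_2_nat[OF p(1)] by simp
  have k: "k \<ge> 2" and n: "k + 2 \<le> n" using assms(2,3) by auto
  have ex: "\<exists>m'. 0 < m' \<and> bound_ineq q k n m'" by (rule bound_ineq_exists[OF q k n])
  moreover have "m \<ge> M_bound q k n \<longrightarrow> (\<exists>C :: (nat \<Rightarrow> 'a) set. is_MRD q n k C \<and> \<not> gen_gabidulin q m n k C)"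
  proof
    assume "m \<ge> M_bound q k n"
    have "0 < M_bound q k n \<and> bound_ineq q k n (M_bound q k n)"
      unfolding M_bound_def by (rule LeastI_ex[OF ex])
    then have "bound_ineq q k n m" "M_bound q k n \<ge> 2"
      using bound_ineq_mono[OF q k n] \<open>m \<ge> M_bound q k n\<close> by auto
    then show "\<exists>C :: (nat \<Rightarrow> 'a) set. is_MRD q n k C \<and> \<not> gen_gabidulin q m n k C"
      using exists_MRD_not_gen_gabidulin[OF assms(4) q k n] \<open>m \<ge> M_bound q k n\<close> by simp
  qed
  ultimately show ?thesis by blast
qed

end
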